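(* Let $\mathbb{K}$ be a field, $R=\mathbb{K}[X_1,\ldots,X_n]$, $J\subsetneq I\subset R$ monomial ideals, and $k\in\mathbb{N}$. Let $I'$ and $J'$ be the monomial ideals obtained from $I$ and $J$ as follows: each minimal monomial generator whose degree in $X_n$ is at least $k$ is multiplied by $X_n$, and all other minimal generators are kept unchanged. Then $\operatorname{sdepth} I/J=\operatorname{sdepth} I'/J'$.
   Context: Stanley depth: with the fine multigrading, a Stanley decomposition of a finitely generated multigraded module $M$ is a finite family $(\mathbb{K}[Z_i], m_i)$ with $m_i$ homogeneous, $Z_i$ subsets of the variables, $m_i\mathbb{K}[Z_i]$ free over $\mathbb{K}[Z_i]$, and $M=\bigoplus_i m_i\mathbb{K}[Z_i]$ as multigraded $\mathbb{K}$-vector spaces; its depth is $\min_i|Z_i|$, and $\operatorname{sdepth}M$ is the maximal depth of a Stanley decomposition. *)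

theory Defs
  imports Main
begin

text \<open>Monomials of K[X_1,...,X_n] are represented by exponent vectors
  a :: nat => nat with a i = 0 for i >= n (variable X_(i+1) has index i).
  Divisibility of monomials is the pointwise order on exponent vectors.\<close>

definition monomials :: "nat \<Rightarrow> (nat \<Rightarrow> nat) set" where
  "monomials n = {a. \<forall>i\<ge>n. a i = 0}"

text \<open>A monomial ideal is identified with the set of monomials it contains
  (which is a K-basis of it): an upward closed set of monomials.\<close>

definition monomial_ideal :: "nat \<Rightarrow> (nat \<Rightarrow> nat) set \<Rightarrow> bool" where
  "monomial_ideal n I \<longleftrightarrow> I \<subseteq> monomials n \<and>
     (\<forall>a\<in>I. \<forall>b\<in>monomials n. a \<le> b \<longrightarrow> b \<in> I)"

definition mon_ideal_gen :: "nat \<Rightarrow> (nat \<Rightarrow> nat) set \<Rightarrow> (nat \<Rightarrow> nat) set" where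
  "mon_ideal_gen n G = {b \<in> monomials n. \<exists>g\<in>G. g \<le> b}"

definition min_gens :: "(nat \<Rightarrow> nat) set \<Rightarrow> (nat \<Rightarrow> nat) set" where
  "min_gens I = {a \<in> I. \<forall>b\<in>I. b \<le> a \<longrightarrow> b = a}"

definition shift_gen :: "nat \<Rightarrow> nat \<Rightarrow> (nat \<Rightarrow> nat) \<Rightarrow> (nat \<Rightarrow> nat)" where
  "shift_gen n k a = (if k \<le> a (n - 1) then a(n - 1 := Suc (a (n - 1))) else a)"

definition shift_ideal :: "nat \<Rightarrow> nat \<Rightarrow> (nat \<Rightarrow> nat) set \<Rightarrow> (nat \<Rightarrow> nat) set" where
  "shift_ideal n k I = mon_ideal_gen n (shift_gen n k ` min_gens I)"

text \<open>Stanley space m K[Z]: its monomials are m * (monomials in the variables Z).\<close>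

definition cone :: "nat \<Rightarrow> (nat \<Rightarrow> nat) \<Rightarrow> nat set \<Rightarrow> (nat \<Rightarrow> nat) set" where
  "cone n m Z = {a \<in> monomials n. m \<le> a \<and> (\<forall>i. i \<notin> Z \<longrightarrow> a i = m i)}"

text \<open>Stanley decomposition of I/J (J \<subseteq> I monomial ideals) with the fine multigrading:
  every homogeneous element of I/J is a scalar multiple of a monomial in I - J;
  m K[Z] is free over K[Z] iff no monomial of m K[Z] lies in J; the direct sum
  decomposition as multigraded vector spaces means the cones partition I - J.\<close>

definition stanley_decomp ::
  "nat \<Rightarrow> (nat \<Rightarrow> nat) set \<Rightarrow> (nat \<Rightarrow> nat) set \<Rightarrow> ((nat \<Rightarrow> nat) \<times> nat set) set \<Rightarrow> bool" where
  "stanley_decomp n I J D \<longleftrightarrow> finite D \<and>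
     (\<forall>(m, Z)\<in>D. Z \<subseteq> {..<n} \<and> m \<in> I - J \<and> cone n m Z \<subseteq> I - J) \<and>
     (\<forall>a\<in>I - J. \<exists>!p\<in>D. a \<in> cone n (fst p) (snd p))"

definition stanley_depth_of :: "((nat \<Rightarrow> nat) \<times> nat set) set \<Rightarrow> nat" where
  "stanley_depth_of D = Min ((\<lambda>p. card (snd p)) ` D)"

definition sdepth :: "nat \<Rightarrow> (nat \<Rightarrow> nat) set \<Rightarrow> (nat \<Rightarrow> nat) set \<Rightarrow> nat" where
  "sdepth n I J = Max {stanley_depth_of D | D. stanley_decomp n I J D}"

end

theory Submission
  imports Defs
begin

text \<open>A monomial lies in \<open>I'\<close> iff it lies in \<open>I\<close> after its \<open>X\<^sub>n\<close>-exponent \<open>t\<close> is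
  lowered to \<open>t\<close> (if \<open>t < k\<close>) or \<open>t - 1\<close> (if \<open>t \<ge> k\<close>), where for \<open>k = 0\<close> the exponent must
  moreover be positive; and it lies in \<open>I\<close> iff it lies in \<open>I'\<close> after \<open>t\<close> is raised to \<open>t\<close> or
  \<open>t + 1\<close>. So the monomials of \<open>I/J\<close> and of \<open>I'/J'\<close> are each the preimage of the other under
  a map changing only the \<open>X\<^sub>n\<close>-exponent, by a reindexing with finite fibres that pulls upper
  sets back to upper sets. The preimage of a Stanley space \<open>m K[Z]\<close> under such a map is a finite
  disjoint union of Stanley spaces \<open>m' K[Z]\<close> with the same \<open>Z\<close>: one if \<open>X\<^sub>n \<in> Z\<close>, one for
  each point of the fibre over the \<open>X\<^sub>n\<close>-exponent of \<open>m\<close> otherwise. Hence Stanley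
  decompositions pull back in both directions without losing depth.\<close>

lemma monomials_upd: "e < n \<Longrightarrow> a \<in> monomials n \<Longrightarrow> a(e := t) \<in> monomials n"
  by (simp add: monomials_def)

lemma finite_below_monomial:
  assumes "a \<in> monomials n"
  shows "finite {b. b \<le> a}"
proof (rule finite_subset)
  let ?B = "{..Max (a ` {..<n})}"
  show "{b. b \<le> a} \<subseteq> {b. \<forall>i. (i \<in> {..<n} \<longrightarrow> b i \<in> ?B) \<and> (i \<notin> {..<n} \<longrightarrow> b i = 0)}"
  proof (intro subsetI CollectI allI conjI impI)
    fix b i assume "b \<in> {b. b \<le> a}"
    then have "b i \<le> a i" by (simp add: le_fun_def)
    moreover have "a i \<le> Max (a ` {..<n})" if "i \<in> {..<n}"
      using that by (intro Max_ge) auto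
    moreover have "a i = 0" if "i \<notin> {..<n}"
      using that assms by (simp add: monomials_def)
    ultimately show "i \<in> {..<n} \<Longrightarrow> b i \<in> ?B" and "i \<notin> {..<n} \<Longrightarrow> b i = 0"
      by (auto intro: le_trans)
  qed
  show "finite {b. \<forall>i. (i \<in> {..<n} \<longrightarrow> b i \<in> ?B) \<and> (i \<notin> {..<n} \<longrightarrow> b i = 0)}"
    by (rule finite_set_of_finite_funs) auto
qed

lemma min_gens_below:
  assumes "monomial_ideal n I" and "a \<in> I"
  shows "\<exists>g\<in>min_gens I. g \<le> a"
proof -
  have "finite {b \<in> I. b \<le> a}"
    using assms finite_below_monomial[of a n] by (auto simp: monomial_ideal_def intro: finite_subset)
  then obtain g where g: "g \<in> I" "g \<le> a" and min: "\<forall>b\<in>{b \<in> I. b \<le> a}. b \<le> g \<longrightarrow> g = b"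
    using finite_has_minimal2[of "{b \<in> I. b \<le> a}" a] assms(2) by auto
  have "g \<in> min_gens I"
    using g min order_trans[of _ g a] by (fastforce simp: min_gens_def)
  with g(2) show ?thesis by blast
qed

definition coord_pullback ::
  "nat \<Rightarrow> nat \<Rightarrow> nat set \<Rightarrow> (nat \<Rightarrow> nat) \<Rightarrow> (nat \<Rightarrow> nat) set \<Rightarrow> (nat \<Rightarrow> nat) set" where
  "coord_pullback n e Q g S = {a \<in> monomials n. a e \<in> Q \<and> a(e := g (a e)) \<in> S}"

lemma coord_pullback_diff:
  "coord_pullback n e Q g (S - T) = coord_pullback n e Q g S - coord_pullback n e Q g T"
  by (auto simp: coord_pullback_def)

lemma coord_pullback_mono: "S \<subseteq> T \<Longrightarrow> coord_pullback n e Q g S \<subseteq> coord_pullback n e Q g T"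
  by (auto simp: coord_pullback_def)

locale coord_reindex =
  fixes n e :: nat and Q :: "nat set" and g :: "nat \<Rightarrow> nat"
  assumes coord_less: "e < n"
    and upper_set_preimage: "\<And>s. \<exists>t. {x \<in> Q. s \<le> g x} = {t..}"
    and finite_fibres: "\<And>s. finite {x \<in> Q. g x = s}"
begin

abbreviation pullback :: "(nat \<Rightarrow> nat) set \<Rightarrow> (nat \<Rightarrow> nat) set" where
  "pullback \<equiv> coord_pullback n e Q g"

definition threshold :: "nat \<Rightarrow> nat" where
  "threshold s = (LEAST x. x \<in> Q \<and> s \<le> g x)"

lemma le_threshold_iff: "threshold s \<le> x \<longleftrightarrow> x \<in> Q \<and> s \<le> g x"
proof -
  obtain t where t: "{x \<in> Q. s \<le> g x} = {t..}"
    using upper_set_preimage by blast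
  then have "\<And>x. x \<in> Q \<and> s \<le> g x \<longleftrightarrow> t \<le> x" by blast
  then have "threshold s = t"
    unfolding threshold_def by (auto intro: Least_equality)
  with t show ?thesis by blast
qed

definition cone_pullback_gens :: "(nat \<Rightarrow> nat) \<Rightarrow> nat set \<Rightarrow> (nat \<Rightarrow> nat) set" where
  "cone_pullback_gens m Z =
     (if e \<in> Z then {m(e := threshold (m e))} else (\<lambda>t. m(e := t)) ` {x \<in> Q. g x = m e})"

lemma finite_cone_pullback_gens: "finite (cone_pullback_gens m Z)"
  using finite_fibres by (simp add: cone_pullback_gens_def)

lemma mem_cone_upd:
  "a \<in> cone n (m(e := t)) Z \<longleftrightarrow> a \<in> monomials n \<and> t \<le> a e \<and> (e \<notin> Z \<longrightarrow> a e = t) \<and>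
     (\<forall>i. i \<noteq> e \<longrightarrow> m i \<le> a i \<and> (i \<notin> Z \<longrightarrow> a i = m i))"
  by (auto simp: cone_def le_fun_def)

lemma coord_pullback_cone:
  "pullback (cone n m Z) = (\<Union>m' \<in> cone_pullback_gens m Z. cone n m' Z)"
proof (intro equalityI subsetI)
  fix a
  assume "a \<in> pullback (cone n m Z)"
  then have a: "a \<in> monomials n" "a e \<in> Q" "a(e := g (a e)) \<in> cone n m Z"
    by (auto simp: coord_pullback_def)
  show "a \<in> (\<Union>m' \<in> cone_pullback_gens m Z. cone n m' Z)"
  proof (cases "e \<in> Z")
    case True
    then show ?thesis using a le_threshold_iff[of "m e" "a e"]
      by (auto simp: cone_pullback_gens_def mem_cone_upd cone_def le_fun_def split: if_splits)
  next
    case False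
    then show ?thesis using a
      by (auto simp: cone_pullback_gens_def mem_cone_upd cone_def le_fun_def split: if_splits)
  qed
next
  fix a
  assume "a \<in> (\<Union>m' \<in> cone_pullback_gens m Z. cone n m' Z)"
  then show "a \<in> pullback (cone n m Z)"
    using coord_less le_threshold_iff[of "m e" "a e"]
    by (auto simp: cone_pullback_gens_def coord_pullback_def mem_cone_upd cone_def le_fun_def
        monomials_upd split: if_splits)
qed

lemma cone_pullback_gens_disjoint:
  assumes "m1 \<in> cone_pullback_gens m Z" "m2 \<in> cone_pullback_gens m Z"
    and "a \<in> cone n m1 Z" "a \<in> cone n m2 Z"
  shows "m1 = m2"
  using assms by (auto simp: cone_pullback_gens_def mem_cone_upd split: if_splits)

definition pullback_decomp ::
  "((nat \<Rightarrow> nat) \<times> nat set) set \<Rightarrow> ((nat \<Rightarrow> nat) \<times> nat set) set" where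
  "pullback_decomp D = (\<Union>(m, Z) \<in> D. (\<lambda>m'. (m', Z)) ` cone_pullback_gens m Z)"

lemma mem_pullback_decomp:
  "(m', Z) \<in> pullback_decomp D \<longleftrightarrow> (\<exists>m. (m, Z) \<in> D \<and> m' \<in> cone_pullback_gens m Z)"
  by (auto simp: pullback_decomp_def)

lemma finite_pullback_decomp: "finite D \<Longrightarrow> finite (pullback_decomp D)"
  using finite_cone_pullback_gens by (auto simp: pullback_decomp_def)

lemma pullback_decomp_spaces:
  assumes D: "stanley_decomp n IB JB D"
    and "IB - JB \<subseteq> monomials n"
    and pull: "IA - JA = pullback (IB - JB)"
    and "(m', Z) \<in> pullback_decomp D"
  shows "Z \<subseteq> {..<n} \<and> m' \<in> IA - JA \<and> cone n m' Z \<subseteq> IA - JA"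
proof -
  obtain m where m: "(m, Z) \<in> D" "m' \<in> cone_pullback_gens m Z"
    using assms(4) mem_pullback_decomp by blast
  have space: "Z \<subseteq> {..<n} \<and> m \<in> IB - JB \<and> cone n m Z \<subseteq> IB - JB"
    using D m(1) by (auto simp: stanley_decomp_def)
  have "cone n m' Z \<subseteq> pullback (cone n m Z)"
    using m(2) coord_pullback_cone by blast
  also have "\<dots> \<subseteq> IA - JA"
    unfolding pull using space by (intro coord_pullback_mono) blast
  finally have sub: "cone n m' Z \<subseteq> IA - JA" .
  have "m \<in> monomials n" using space assms(2) by blast
  then have "m' \<in> cone n m' Z"
    using m(2) coord_less
    by (auto simp: cone_pullback_gens_def cone_def monomials_upd split: if_splits)
  with sub space show ?thesis by blast
qed

lemma pullback_decomp_unique_cover: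
  assumes D: "stanley_decomp n IB JB D"
    and pull: "IA - JA = pullback (IB - JB)"
    and a: "a \<in> IA - JA"
  shows "\<exists>!r\<in>pullback_decomp D. a \<in> cone n (fst r) (snd r)"
proof -
  let ?b = "a(e := g (a e))"
  have "?b \<in> IB - JB" using a pull by (simp add: coord_pullback_def)
  then have "\<exists>!p\<in>D. ?b \<in> cone n (fst p) (snd p)"
    using D unfolding stanley_decomp_def by blast
  then obtain p where p: "p \<in> D" "?b \<in> cone n (fst p) (snd p)"
    and uniq: "\<And>p'. p' \<in> D \<Longrightarrow> ?b \<in> cone n (fst p') (snd p') \<Longrightarrow> p' = p"
    by blast
  obtain m Z where p_eq: "p = (m, Z)" by fastforce
  have in_pullback: "a \<in> pullback (cone n m' Z') \<longleftrightarrow> ?b \<in> cone n m' Z'" for m' Z'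
    using a pull by (simp add: coord_pullback_def)
  obtain m' where m': "m' \<in> cone_pullback_gens m Z" "a \<in> cone n m' Z"
    using p(2) p_eq in_pullback[of m Z] coord_pullback_cone by auto
  show ?thesis
  proof (rule ex1I[of _ "(m', Z)"])
    show "(m', Z) \<in> pullback_decomp D \<and> a \<in> cone n (fst (m', Z)) (snd (m', Z))"
      using p(1) p_eq m' mem_pullback_decomp by auto
    fix r
    assume r: "r \<in> pullback_decomp D \<and> a \<in> cone n (fst r) (snd r)"
    obtain m1' Z1 where r_eq: "r = (m1', Z1)" by fastforce
    then obtain m1 where m1: "(m1, Z1) \<in> D" "m1' \<in> cone_pullback_gens m1 Z1"
      using r mem_pullback_decomp by blast
    have "a \<in> pullback (cone n m1 Z1)"
      using m1(2) r r_eq coord_pullback_cone by auto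
    then have "(m1, Z1) = p"
      using uniq[OF m1(1)] in_pullback by simp
    then have "m1 = m" "Z1 = Z" using p_eq by simp_all
    then have "m1' = m'"
      using cone_pullback_gens_disjoint[of m1' m Z m' a] m1(2) m' r r_eq by simp
    with r_eq \<open>Z1 = Z\<close> show "r = (m', Z)" by simp
  qed
qed

lemma stanley_decomp_pullback:
  assumes "stanley_decomp n IB JB D"
    and "IB - JB \<subseteq> monomials n"
    and "IA - JA = pullback (IB - JB)"
  shows "stanley_decomp n IA JA (pullback_decomp D)"
proof -
  have "finite (pullback_decomp D)"
    using assms(1) finite_pullback_decomp by (simp add: stanley_decomp_def)
  moreover have "\<forall>(m', Z) \<in> pullback_decomp D. Z \<subseteq> {..<n} \<and> m' \<in> IA - JA \<and> cone n m' Z \<subseteq> IA - JA"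
    using pullback_decomp_spaces[OF assms] by blast
  moreover have "\<forall>a \<in> IA - JA. \<exists>!r\<in>pullback_decomp D. a \<in> cone n (fst r) (snd r)"
    using pullback_decomp_unique_cover[OF assms(1,3)] by blast
  ultimately show ?thesis by (simp add: stanley_decomp_def)
qed

lemma stanley_depth_of_pullback_decomp:
  assumes "finite D" and "pullback_decomp D \<noteq> {}"
  shows "stanley_depth_of D \<le> stanley_depth_of (pullback_decomp D)"
proof -
  have "finite (pullback_decomp D)"
    using assms(1) by (rule finite_pullback_decomp)
  moreover have "\<And>r. r \<in> pullback_decomp D \<Longrightarrow> \<exists>p\<in>D. snd r = snd p"
    by (force simp: pullback_decomp_def)
  ultimately show ?thesis
    using assms unfolding stanley_depth_of_def
    by (force intro!: Min.boundedI intro: Min_le)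
qed

lemma stanley_decomp_pullback_depth:
  assumes "stanley_decomp n IB JB D"
    and "IB - JB \<subseteq> monomials n"
    and "IA - JA = pullback (IB - JB)" and "IA - JA \<noteq> {}"
  shows "\<exists>D'. stanley_decomp n IA JA D' \<and> stanley_depth_of D \<le> stanley_depth_of D'"
proof -
  have D': "stanley_decomp n IA JA (pullback_decomp D)"
    using stanley_decomp_pullback[OF assms(1-3)] .
  then have "pullback_decomp D \<noteq> {}"
    using assms(4) by (auto simp: stanley_decomp_def)
  moreover have "finite D" using assms(1) by (simp add: stanley_decomp_def)
  ultimately show ?thesis
    using D' stanley_depth_of_pullback_decomp by blast
qed

end

lemma Max_eq_if_cofinal:
  fixes A B :: "'a::linorder set"
  assumes "finite A" "finite B"
    and "\<And>a. a \<in> A \<Longrightarrow> \<exists>b\<in>B. a \<le> b" and "\<And>b. b \<in> B \<Longrightarrow> \<exists>a\<in>A. b \<le> a"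
  shows "Max A = Max B"
proof (cases "A = {}")
  case True
  with assms(4) have "B = {}" by blast
  with True show ?thesis by simp
next
  case False
  with assms(3) have "B \<noteq> {}" by blast
  have "Max A \<le> Max B"
    using assms(1-3) False \<open>B \<noteq> {}\<close> by (meson Max_ge Max_in order_trans)
  moreover have "Max B \<le> Max A"
    using assms(1,2,4) False \<open>B \<noteq> {}\<close> by (meson Max_ge Max_in order_trans)
  ultimately show ?thesis by (rule antisym)
qed

lemma stanley_depth_of_le:
  assumes "stanley_decomp n I J D" and "D \<noteq> {}"
  shows "stanley_depth_of D \<le> n"
proof -
  have "finite D" and "\<And>m Z. (m, Z) \<in> D \<Longrightarrow> Z \<subseteq> {..<n}"
    using assms(1) by (auto simp: stanley_decomp_def)
  obtain m Z where p: "(m, Z) \<in> D" using assms(2) by auto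
  have "stanley_depth_of D \<le> card Z"
    unfolding stanley_depth_of_def using \<open>finite D\<close> p by (intro Min_le) (auto intro: rev_image_eqI)
  also have "\<dots> \<le> n"
    using \<open>(m, Z) \<in> D \<Longrightarrow> Z \<subseteq> {..<n}\<close> p by (metis card_lessThan card_mono finite_lessThan)
  finally show ?thesis .
qed

lemma finite_stanley_depths: "finite {stanley_depth_of D | D. stanley_decomp n I J D}"
proof (rule finite_subset)
  show "{stanley_depth_of D | D. stanley_decomp n I J D} \<subseteq> insert (stanley_depth_of {}) {..n}"
    using stanley_depth_of_le by fastforce
qed simp

lemma sdepth_eqI:
  assumes "\<And>D. stanley_decomp n I J D \<Longrightarrow>
      \<exists>D'. stanley_decomp n I' J' D' \<and> stanley_depth_of D \<le> stanley_depth_of D'"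
    and "\<And>D'. stanley_decomp n I' J' D' \<Longrightarrow>
      \<exists>D. stanley_decomp n I J D \<and> stanley_depth_of D' \<le> stanley_depth_of D"
  shows "sdepth n I J = sdepth n I' J'"
  unfolding sdepth_def
  by (rule Max_eq_if_cofinal[OF finite_stanley_depths finite_stanley_depths]) (use assms in blast)+

definition shift_exp :: "nat \<Rightarrow> nat \<Rightarrow> nat" where
  "shift_exp k t = (if t < k then t else Suc t)"

definition unshift_exp :: "nat \<Rightarrow> nat \<Rightarrow> nat" where
  "unshift_exp k t = (if t < k then t else t - 1)"

lemma shift_ideal_eq_coord_pullback:
  assumes "monomial_ideal n I" and "n \<ge> 1"
  shows "shift_ideal n k I = coord_pullback n (n - 1) {t. 0 < k \<or> 0 < t} (unshift_exp k) I"
proof (intro equalityI subsetI)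
  let ?e = "n - 1"
  have e: "?e < n" using assms(2) by simp
  fix a
  assume "a \<in> shift_ideal n k I"
  then obtain g where g: "g \<in> min_gens I" "shift_gen n k g \<le> a" and a: "a \<in> monomials n"
    by (auto simp: shift_ideal_def mon_ideal_gen_def)
  have "g \<in> I" using g(1) by (simp add: min_gens_def)
  have ae: "0 < k \<or> 0 < a ?e" and "g ?e \<le> unshift_exp k (a ?e)"
    using g(2) le_funD[OF g(2), of ?e]
    by (auto simp: shift_gen_def unshift_exp_def split: if_splits)
  moreover have "g i \<le> a i" if "i \<noteq> ?e" for i
    using le_funD[OF g(2), of i] that by (simp add: shift_gen_def split: if_splits)
  ultimately have "g \<le> a(?e := unshift_exp k (a ?e))"
    by (simp add: le_fun_def)
  then have "a(?e := unshift_exp k (a ?e)) \<in> I"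
    using assms(1) \<open>g \<in> I\<close> monomials_upd[OF e a] by (auto simp: monomial_ideal_def)
  with a ae show "a \<in> coord_pullback n ?e {t. 0 < k \<or> 0 < t} (unshift_exp k) I"
    by (simp add: coord_pullback_def)
next
  let ?e = "n - 1"
  fix a
  assume "a \<in> coord_pullback n ?e {t. 0 < k \<or> 0 < t} (unshift_exp k) I"
  then have a: "a \<in> monomials n" and ae: "0 < k \<or> 0 < a ?e"
    and aI: "a(?e := unshift_exp k (a ?e)) \<in> I"
    by (auto simp: coord_pullback_def)
  obtain g where g: "g \<in> min_gens I" "g \<le> a(?e := unshift_exp k (a ?e))"
    using min_gens_below[OF assms(1) aI] by blast
  have "shift_gen n k g \<le> a"
  proof (rule le_funI)
    fix i
    show "shift_gen n k g i \<le> a i"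
      using le_funD[OF g(2), of i] ae
      by (cases "i = ?e") (auto simp: shift_gen_def unshift_exp_def split: if_splits)
  qed
  with g(1) a show "a \<in> shift_ideal n k I"
    by (auto simp: shift_ideal_def mon_ideal_gen_def)
qed

lemma eq_coord_pullback_shift_ideal:
  assumes "monomial_ideal n I" and "n \<ge> 1"
  shows "I = coord_pullback n (n - 1) UNIV (shift_exp k) (shift_ideal n k I)"
proof -
  have "n - 1 < n" using assms(2) by simp
  moreover have "I \<subseteq> monomials n" using assms(1) by (simp add: monomial_ideal_def)
  ultimately show ?thesis
    by (auto simp: shift_ideal_eq_coord_pullback[OF assms] coord_pullback_def monomials_upd
        shift_exp_def unshift_exp_def)
qed

lemma coord_reindex_unshift_exp:
  assumes "e < n"
  shows "coord_reindex n e {t. 0 < k \<or> 0 < t} (unshift_exp k)"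
proof
  fix s
  show "\<exists>t. {x \<in> {t. 0 < k \<or> 0 < t}. s \<le> unshift_exp k x} = {t..}"
    by (rule exI[of _ "if s < k then s else Suc s"]) (auto simp: unshift_exp_def)
  show "finite {x \<in> {t. 0 < k \<or> 0 < t}. unshift_exp k x = s}"
    by (rule finite_subset[of _ "{..Suc s}"]) (auto simp: unshift_exp_def)
qed (rule assms)

lemma coord_reindex_shift_exp:
  assumes "e < n"
  shows "coord_reindex n e UNIV (shift_exp k)"
proof
  fix s
  show "\<exists>t. {x \<in> UNIV. s \<le> shift_exp k x} = {t..}"
    by (rule exI[of _ "if s \<le> k then s else s - 1"]) (auto simp: shift_exp_def)
  show "finite {x \<in> UNIV. shift_exp k x = s}"
    by (rule finite_subset[of _ "{..s}"]) (auto simp: shift_exp_def)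
qed (rule assms)

theorem proposition5p1:
  fixes n k :: nat and I J :: "(nat \<Rightarrow> nat) set"
  assumes "n \<ge> 1"
    and "monomial_ideal n I" and "monomial_ideal n J"
    and "J \<subset> I"
  shows "sdepth n I J = sdepth n (shift_ideal n k I) (shift_ideal n k J)"
proof -
  let ?e = "n - 1" and ?I' = "shift_ideal n k I" and ?J' = "shift_ideal n k J"
  interpret unshift: coord_reindex n ?e "{t. 0 < k \<or> 0 < t}" "unshift_exp k"
    using assms(1) by (intro coord_reindex_unshift_exp) simp
  interpret shift: coord_reindex n ?e UNIV "shift_exp k"
    using assms(1) by (intro coord_reindex_shift_exp) simp
  have diff': "?I' - ?J' = unshift.pullback (I - J)"
    using shift_ideal_eq_coord_pullback assms(1-3) coord_pullback_diff by metis
  have diff: "I - J = shift.pullback (?I' - ?J')"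
    using eq_coord_pullback_shift_ideal assms(1-3) coord_pullback_diff by metis
  have "I - J \<noteq> {}" and "I - J \<subseteq> monomials n"
    using assms(2,4) by (auto simp: monomial_ideal_def)
  moreover have "?I' - ?J' \<subseteq> monomials n"
    by (auto simp: shift_ideal_def mon_ideal_gen_def)
  moreover from diff \<open>I - J \<noteq> {}\<close> have "?I' - ?J' \<noteq> {}"
    by (auto simp: coord_pullback_def)
  ultimately show ?thesis
    using unshift.stanley_decomp_pullback_depth[OF _ _ diff']
      shift.stanley_decomp_pullback_depth[OF _ _ diff]
    by (intro sdepth_eqI) blast+
qed

end
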